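(* In the setup below, let $V\subseteq K_2^T(C)$ be the subgroup generated by all elements $R(i;j,k|l;m,n)$ and $T(i,j|k,l|m,n)$. Then $V$ is generated by the elements $R(1;1,j\,|\,2;1,m)$ for $1<j\le N_1$, $1<m\le N_2$; $T(1,1\,|\,k,l\,|\,m,n)$ for $2\le k<m\le N$, $1\le l\le N_k$, $1\le n\le N_m$; $T(1,j\,|\,2,1\,|\,m,n)$ for $2\le j\le N_1$, $3\le m\le N$, $1\le n\le N_m$. (The number of these generators equals $\sum_{1\le i<k\le N}N_iN_k-\sum_{i}N_i+1$.)
   Context: Let $K$ be a field, $N\ge2$, $N_1,\dots,N_N\ge1$. For $1\le i\le N$, $1\le j\le N_i$ let $L_{i,j}=a_ix+b_iy+c_{i,j}$ with $a_i,b_i,c_{i,j}\in K$, $(a_i,b_i)\ne(0,0)$, such that the affine lines $L_{i,j}=0$ are pairwise distinct and $[i,k]:=a_ib_k-a_kb_i\neq0$ for $i\neq k$. For $\lambda\in K^*$ put $f(x,y)=\lambda\prod_{i,j}L_{i,j}-1$; let $C$ be the normalisation of the projective closure of the (irreducible) affine curve $f=0$ and $F$ its function field, with the $L_{i,j}$ viewed in $F^*$. $K_2(F)$ is the abelian group generated by symbols $\{a,b\}$, bimultiplicative and with $\{a,1-a\}=0$; $K_2^T(C)$ is the kernel of the sum of the tame symbols $T_x(\{a,b\})=(-1)^{\mathrm{ord}_x a\,\mathrm{ord}_x b}(a^{\mathrm{ord}_x b}/b^{\mathrm{ord}_x a})(x)$ over all closed points $x$ of $C$. Define $R(i;j,k\,|\,l;m,n)=\{L_{i,j}/L_{i,k},\,L_{l,m}/L_{l,n}\}$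 ($i\ne l$) and $T(i,j\,|\,k,l\,|\,m,n)=\Bigl\{\frac{[i,m]}{[k,m]}\frac{L_{k,l}}{L_{i,j}},\,\frac{[i,k]}{[m,k]}\frac{L_{m,n}}{L_{i,j}}\Bigr\}$ ($i,k,m$ pairwise distinct); these lie in $K_2^T(C)$. *)

theory Defs
  imports "HOL-Library.Poly_Mapping" "HOL-Computational_Algebra.Polynomial_Factorial"
begin

text \<open>K_2(F) is the quotient of the free abelian group on F* x F* by the subgroup
  generated by the bimultiplicativity and Steinberg relations.  A subgroup of
  K_2(F) generated by symbols is represented by its preimage in the free group,
  i.e. the subgroup generated by the symbols together with the relations.\<close>

definition symb :: "'f \<Rightarrow> 'f \<Rightarrow> ('f \<times> 'f) \<Rightarrow>\<^sub>0 int" where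
  "symb u v = Poly_Mapping.single (u, v) 1"

inductive_set gen_subgroup :: "'b::ab_group_add set \<Rightarrow> 'b set" for S where
  gen_zero: "0 \<in> gen_subgroup S"
| gen_base: "x \<in> S \<Longrightarrow> x \<in> gen_subgroup S"
| gen_diff: "x \<in> gen_subgroup S \<Longrightarrow> y \<in> gen_subgroup S \<Longrightarrow> x - y \<in> gen_subgroup S"

definition K2_relators :: "(('f::field \<times> 'f) \<Rightarrow>\<^sub>0 int) set" where
  "K2_relators =
     {symb (u * u') v - symb u v - symb u' v | u u' v. u \<noteq> 0 \<and> u' \<noteq> 0 \<and> v \<noteq> 0}
   \<union> {symb u (v * v') - symb u v - symb u v' | u v v'. u \<noteq> 0 \<and> v \<noteq> 0 \<and> v' \<noteq> 0}
   \<union> {symb u (1 - u) | u. u \<noteq> 0 \<and> u \<noteq> 1}"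

definition K2_span :: "(('f::field \<times> 'f) \<Rightarrow>\<^sub>0 int) set \<Rightarrow> (('f \<times> 'f) \<Rightarrow>\<^sub>0 int) set" where
  "K2_span S = gen_subgroup (S \<union> K2_relators)"

text \<open>F is a field with a field embedding iota of K and elements X, Y (the images of x, y)
  such that F is generated as a field by iota(K), X, Y, X is transcendental over iota(K),
  and f(X,Y) = 0.  Together with irreducibility of f this characterises F up to
  isomorphism as Frac(K[x,y]/(f)), the function field of C.\<close>

definition subfield_closed :: "'f::field set \<Rightarrow> bool" where
  "subfield_closed S \<longleftrightarrow> 0 \<in> S \<and> 1 \<in> S \<and>
     (\<forall>u\<in>S. \<forall>v\<in>S. u + v \<in> S \<and> u * v \<in> S) \<and>
     (\<forall>u\<in>S. - u \<in> S \<and> inverse u \<in> S)"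

definition is_function_field ::
    "('a::field \<Rightarrow> 'f::field) \<Rightarrow> 'f \<Rightarrow> 'f \<Rightarrow> bool" where
  "is_function_field \<iota> X Y \<longleftrightarrow>
     (\<forall>u v. \<iota> (u + v) = \<iota> u + \<iota> v) \<and> (\<forall>u v. \<iota> (u * v) = \<iota> u * \<iota> v) \<and> \<iota> 1 = 1 \<and>
     (\<forall>p. p \<noteq> 0 \<longrightarrow> poly (map_poly \<iota> p) X \<noteq> 0) \<and>
     (\<forall>S. subfield_closed S \<and> range \<iota> \<subseteq> S \<and> X \<in> S \<and> Y \<in> S \<longrightarrow> S = UNIV)"

definition idx :: "nat \<Rightarrow> (nat \<Rightarrow> nat) \<Rightarrow> (nat \<times> nat) set" where
  "idx N Ns = {(i, j). 1 \<le> i \<and> i \<le> N \<and> 1 \<le> j \<and> j \<le> Ns i}"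

definition bracket :: "(nat \<Rightarrow> 'a::field) \<Rightarrow> (nat \<Rightarrow> 'a) \<Rightarrow> nat \<Rightarrow> nat \<Rightarrow> 'a" where
  "bracket a b i k = a i * b k - a k * b i"

text \<open>L_{i,j} = a_i x + b_i y + c_{i,j} as an element of K[x][y] (outer variable y).\<close>
definition Lpoly :: "(nat \<Rightarrow> 'a::field) \<Rightarrow> (nat \<Rightarrow> 'a) \<Rightarrow> (nat \<Rightarrow> nat \<Rightarrow> 'a) \<Rightarrow> nat \<Rightarrow> nat \<Rightarrow> 'a poly poly" where
  "Lpoly a b c i j = [: [: c i j, a i :], [: b i :] :]"

definition fpoly :: "nat \<Rightarrow> (nat \<Rightarrow> nat) \<Rightarrow> 'a::field \<Rightarrow> (nat \<Rightarrow> 'a) \<Rightarrow> (nat \<Rightarrow> 'a) \<Rightarrow> (nat \<Rightarrow> nat \<Rightarrow> 'a) \<Rightarrow> 'a poly poly" where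
  "fpoly N Ns lam a b c = smult [: lam :] (\<Prod>(i, j)\<in>idx N Ns. Lpoly a b c i j) - 1"

definition Lf :: "('a::field \<Rightarrow> 'f::field) \<Rightarrow> (nat \<Rightarrow> 'a) \<Rightarrow> (nat \<Rightarrow> 'a) \<Rightarrow> (nat \<Rightarrow> nat \<Rightarrow> 'a) \<Rightarrow> 'f \<Rightarrow> 'f \<Rightarrow> nat \<Rightarrow> nat \<Rightarrow> 'f" where
  "Lf \<iota> a b c X Y i j = \<iota> (a i) * X + \<iota> (b i) * Y + \<iota> (c i j)"

definition Rel :: "('a::field \<Rightarrow> 'f::field) \<Rightarrow> (nat \<Rightarrow> 'a) \<Rightarrow> (nat \<Rightarrow> 'a) \<Rightarrow> (nat \<Rightarrow> nat \<Rightarrow> 'a) \<Rightarrow> 'f \<Rightarrow> 'f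
    \<Rightarrow> nat \<Rightarrow> nat \<Rightarrow> nat \<Rightarrow> nat \<Rightarrow> nat \<Rightarrow> nat \<Rightarrow> ('f \<times> 'f) \<Rightarrow>\<^sub>0 int" where
  "Rel \<iota> a b c X Y i j k l m n =
     symb (Lf \<iota> a b c X Y i j / Lf \<iota> a b c X Y i k) (Lf \<iota> a b c X Y l m / Lf \<iota> a b c X Y l n)"

definition Tel :: "('a::field \<Rightarrow> 'f::field) \<Rightarrow> (nat \<Rightarrow> 'a) \<Rightarrow> (nat \<Rightarrow> 'a) \<Rightarrow> (nat \<Rightarrow> nat \<Rightarrow> 'a) \<Rightarrow> 'f \<Rightarrow> 'f
    \<Rightarrow> nat \<Rightarrow> nat \<Rightarrow> nat \<Rightarrow> nat \<Rightarrow> nat \<Rightarrow> nat \<Rightarrow> ('f \<times> 'f) \<Rightarrow>\<^sub>0 int" where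
  "Tel \<iota> a b c X Y i j k l m n =
     symb (\<iota> (bracket a b i m / bracket a b k m) * Lf \<iota> a b c X Y k l / Lf \<iota> a b c X Y i j)
          (\<iota> (bracket a b i k / bracket a b m k) * Lf \<iota> a b c X Y m n / Lf \<iota> a b c X Y i j)"

end

theory Submission
  imports Defs
begin

text \<open>Expand every R and T bilinearly into the pairings
  e(L_ij, L_kl) = {L_ij, L_kl} - {L_ij, [i,k]} + {L_kl, [k,i]}, which are antisymmetric, and into
  symbols in the constants [i,k]: R(i;j,k|l;m,n) is the alternating sum of e over a rectangle, and
  T(i,j|k,l|m,n) the sum of e around a triangle plus a constant kappa(i,k,m), which is a 2-cocycle
  because of the Pluecker relation among the brackets. Correcting e by a coboundary and by
  kappa(1,-,-) does not change R or T, and makes every corrected pairing a listed generator or a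
  difference of two; so all R and T lie in the span of the list.\<close>

lemma gen_subgroup_uminus: "x \<in> gen_subgroup S \<Longrightarrow> - x \<in> gen_subgroup S"
  using gen_diff[OF gen_zero, of x S] by simp

lemma gen_subgroup_add: "x \<in> gen_subgroup S \<Longrightarrow> y \<in> gen_subgroup S \<Longrightarrow> x + y \<in> gen_subgroup S"
  using gen_diff[OF _ gen_subgroup_uminus, of x S y] by simp

lemma gen_subgroup_subset:
  assumes "S \<subseteq> gen_subgroup T"
  shows "gen_subgroup S \<subseteq> gen_subgroup T"
proof
  show "x \<in> gen_subgroup T" if "x \<in> gen_subgroup S" for x
    using that by induction (use assms in \<open>auto intro: gen_subgroup.intros\<close>)
qed

lemma gen_subgroup_mono: "S \<subseteq> T \<Longrightarrow> gen_subgroup S \<subseteq> gen_subgroup T"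
  by (rule gen_subgroup_subset) (auto intro: gen_base)

lemma gen_subgroup_image:
  assumes hom: "\<And>x y. h (x - y) = h x - h y"
  shows "gen_subgroup (h ` S) = h ` gen_subgroup S"
proof
  have h0: "h 0 = 0"
    using hom[of 0 0] by simp
  show "gen_subgroup (h ` S) \<subseteq> h ` gen_subgroup S"
  proof
    show "z \<in> h ` gen_subgroup S" if "z \<in> gen_subgroup (h ` S)" for z
      using that
    proof induction
      case gen_zero
      show ?case using h0 gen_subgroup.gen_zero by force
    next
      case (gen_base z)
      then show ?case by (auto intro: gen_subgroup.gen_base)
    next
      case (gen_diff z z')
      then show ?case by (auto simp flip: hom intro: gen_subgroup.gen_diff)
    qed
  qed
  have "h x \<in> gen_subgroup (h ` S)" if "x \<in> gen_subgroup S" for x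
    using that by induction (auto simp: h0 hom intro: gen_subgroup.intros)
  then show "h ` gen_subgroup S \<subseteq> gen_subgroup (h ` S)"
    by blast
qed

definition k2rel :: "(('f::field \<times> 'f) \<Rightarrow>\<^sub>0 int) \<Rightarrow> (('f \<times> 'f) \<Rightarrow>\<^sub>0 int) \<Rightarrow> bool" where
  "k2rel x y \<longleftrightarrow> x - y \<in> gen_subgroup K2_relators"

lemma equivp_k2rel: "equivp k2rel"
proof (rule equivpI)
  show "reflp k2rel" by (auto simp: reflp_def k2rel_def intro: gen_zero)
  show "symp k2rel" unfolding symp_def k2rel_def using gen_subgroup_uminus by fastforce
  show "transp k2rel" unfolding transp_def k2rel_def using gen_subgroup_add by fastforce
qed

quotient_type (overloaded) 'f k2 = "('f::field \<times> 'f) \<Rightarrow>\<^sub>0 int" / k2rel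
  by (rule equivp_k2rel)

instantiation k2 :: (field) ab_group_add
begin

lift_definition zero_k2 :: "'a k2" is 0 .

lift_definition plus_k2 :: "'a k2 \<Rightarrow> 'a k2 \<Rightarrow> 'a k2" is "(+)"
  unfolding k2rel_def by (drule (1) gen_subgroup_add) (simp add: algebra_simps)

lift_definition minus_k2 :: "'a k2 \<Rightarrow> 'a k2 \<Rightarrow> 'a k2" is "(-)"
  unfolding k2rel_def by (drule (1) gen_diff) (simp add: algebra_simps)

lift_definition uminus_k2 :: "'a k2 \<Rightarrow> 'a k2" is "uminus"
  unfolding k2rel_def by (drule gen_subgroup_uminus) (simp add: algebra_simps)

instance by standard (transfer; simp add: algebra_simps k2rel_def gen_zero)+

end

lift_definition k2_symbol :: "'f::field \<Rightarrow> 'f \<Rightarrow> 'f k2" is symb .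

lemma abs_k2_diff: "abs_k2 (x - y) = abs_k2 x - abs_k2 y"
  by (simp add: minus_k2.abs_eq k2rel_def gen_zero)

lemma abs_k2_add: "abs_k2 (x + y) = abs_k2 x + abs_k2 y"
  by (simp add: plus_k2.abs_eq k2rel_def gen_zero)

lemma abs_k2_eq_0_iff: "abs_k2 x = 0 \<longleftrightarrow> x \<in> gen_subgroup K2_relators"
  by (simp add: zero_k2_def k2.abs_eq_iff k2rel_def)

lemma K2_span_eq_vimage: "K2_span S = abs_k2 -` gen_subgroup (abs_k2 ` S)"
proof
  show "K2_span S \<subseteq> abs_k2 -` gen_subgroup (abs_k2 ` S)"
  proof
    show "x \<in> abs_k2 -` gen_subgroup (abs_k2 ` S)" if "x \<in> K2_span S" for x
      using that unfolding K2_span_def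
    proof induction
      case gen_zero
      then show ?case by (simp add: zero_k2_def[symmetric] gen_subgroup.gen_zero)
    next
      case (gen_base x)
      then have "x \<in> S \<or> abs_k2 x = 0"
        by (auto simp: abs_k2_eq_0_iff intro: gen_subgroup.gen_base)
      then show ?case
        by (auto intro: gen_subgroup.intros)
    next
      case (gen_diff x y)
      then show ?case by (simp add: abs_k2_diff gen_subgroup.gen_diff)
    qed
  qed
  show "abs_k2 -` gen_subgroup (abs_k2 ` S) \<subseteq> K2_span S"
  proof
    fix x assume "x \<in> abs_k2 -` gen_subgroup (abs_k2 ` S)"
    then obtain y where y: "y \<in> gen_subgroup S" "abs_k2 x = abs_k2 y"
      by (auto simp: gen_subgroup_image abs_k2_diff)
    then have "x - y \<in> gen_subgroup K2_relators"
      by (simp add: abs_k2_eq_0_iff[symmetric] abs_k2_diff)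
    with y(1) have "(x - y) + y \<in> K2_span S"
      unfolding K2_span_def using gen_subgroup_mono[of _ "S \<union> K2_relators"]
      by (intro gen_subgroup_add) auto
    then show "x \<in> K2_span S" by simp
  qed
qed

lemma abs_k2_relator: "r \<in> K2_relators \<Longrightarrow> abs_k2 r = 0"
  by (simp add: abs_k2_eq_0_iff gen_base)

lemma k2_symbol_mult_left:
  assumes "u \<noteq> 0" "u' \<noteq> 0" "v \<noteq> 0"
  shows "k2_symbol (u * u') v = k2_symbol u v + k2_symbol u' v"
proof -
  have "abs_k2 (symb (u * u') v - symb u v - symb u' v) = 0"
    using assms by (intro abs_k2_relator) (unfold K2_relators_def, blast)
  then show ?thesis by (simp add: abs_k2_diff abs_k2_add k2_symbol.abs_eq algebra_simps)
qed

lemma k2_symbol_mult_right: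
  assumes "u \<noteq> 0" "v \<noteq> 0" "v' \<noteq> 0"
  shows "k2_symbol u (v * v') = k2_symbol u v + k2_symbol u v'"
proof -
  have "abs_k2 (symb u (v * v') - symb u v - symb u v') = 0"
    using assms by (intro abs_k2_relator) (unfold K2_relators_def, blast)
  then show ?thesis by (simp add: abs_k2_diff abs_k2_add k2_symbol.abs_eq algebra_simps)
qed

lemma k2_symbol_one_minus: "u \<noteq> 0 \<Longrightarrow> u \<noteq> 1 \<Longrightarrow> k2_symbol u (1 - u) = 0"
  unfolding k2_symbol.abs_eq by (rule abs_k2_relator) (unfold K2_relators_def, blast)

lemma k2_symbol_one_left: "v \<noteq> 0 \<Longrightarrow> k2_symbol 1 v = 0"
  using k2_symbol_mult_left[of 1 1 v] by simp

lemma k2_symbol_one_right: "u \<noteq> 0 \<Longrightarrow> k2_symbol u 1 = 0"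
  using k2_symbol_mult_right[of u 1 1] by simp

lemma k2_symbol_inverse_left: "u \<noteq> 0 \<Longrightarrow> v \<noteq> 0 \<Longrightarrow> k2_symbol (inverse u) v = - k2_symbol u v"
  using k2_symbol_mult_left[of u "inverse u" v] k2_symbol_one_left[of v]
  by (simp add: eq_neg_iff_add_eq_0 add.commute)

lemma k2_symbol_inverse_right: "u \<noteq> 0 \<Longrightarrow> v \<noteq> 0 \<Longrightarrow> k2_symbol u (inverse v) = - k2_symbol u v"
  using k2_symbol_mult_right[of u v "inverse v"] k2_symbol_one_right[of u]
  by (simp add: eq_neg_iff_add_eq_0 add.commute)

lemma k2_symbol_divide_left:
  "u \<noteq> 0 \<Longrightarrow> u' \<noteq> 0 \<Longrightarrow> v \<noteq> 0 \<Longrightarrow> k2_symbol (u / u') v = k2_symbol u v - k2_symbol u' v"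
  by (simp add: divide_inverse k2_symbol_mult_left k2_symbol_inverse_left)

lemma k2_symbol_divide_right:
  "u \<noteq> 0 \<Longrightarrow> v \<noteq> 0 \<Longrightarrow> v' \<noteq> 0 \<Longrightarrow> k2_symbol u (v / v') = k2_symbol u v - k2_symbol u v'"
  by (simp add: divide_inverse k2_symbol_mult_right k2_symbol_inverse_right)

lemma k2_symbol_minus_self:
  assumes u: "u \<noteq> 0"
  shows "k2_symbol u (- u) = 0"
proof (cases "u = 1")
  case False
  have "- u = (1 - u) / (1 - inverse u)" and "1 - inverse u \<noteq> 0"
    using u False by (simp_all add: field_simps)
  then have "k2_symbol u (- u) = k2_symbol u (1 - u) - k2_symbol u (1 - inverse u)"
    using u False by (simp add: k2_symbol_divide_right)
  also have "\<dots> = k2_symbol (inverse u) (1 - inverse u)"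
    using u False \<open>1 - inverse u \<noteq> 0\<close> k2_symbol_inverse_left[of u "1 - inverse u"]
    by (simp add: k2_symbol_one_minus)
  also have "\<dots> = 0"
    using u False by (intro k2_symbol_one_minus) auto
  finally show ?thesis .
qed (simp add: k2_symbol_one_left u)

lemma k2_symbol_antisym:
  assumes "u \<noteq> 0" "v \<noteq> 0"
  shows "k2_symbol v u = - k2_symbol u v"
proof -
  have "k2_symbol (u * v) (- (u * v)) = k2_symbol u ((- u) * v) + k2_symbol v (u * (- v))"
    using assms by (simp add: k2_symbol_mult_left)
  also have "\<dots> = k2_symbol u v + k2_symbol v u"
    using assms k2_symbol_mult_right[of u "- u" v] k2_symbol_mult_right[of v u "- v"]
    by (simp add: k2_symbol_minus_self)
  finally show ?thesis
    using assms by (simp add: k2_symbol_minus_self eq_neg_iff_add_eq_0 add.commute)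
qed

definition k2_sign :: "'f::field \<Rightarrow> 'f k2" where
  "k2_sign x = k2_symbol x (- 1)"

lemma k2_sign_add_self: "x \<noteq> 0 \<Longrightarrow> k2_sign x + k2_sign x = 0"
  unfolding k2_sign_def using k2_symbol_mult_right[of x "- 1" "- 1"] k2_symbol_one_right[of x]
  by simp

lemma k2_sign_add_self_left: "x \<noteq> 0 \<Longrightarrow> k2_sign x + (k2_sign x + z) = z"
  by (simp add: add.assoc[symmetric] k2_sign_add_self)

lemma k2_sign_uminus: "x \<noteq> 0 \<Longrightarrow> - k2_sign x = k2_sign x"
  by (rule minus_unique[OF k2_sign_add_self])

lemma k2_sign_mult: "x \<noteq> 0 \<Longrightarrow> y \<noteq> 0 \<Longrightarrow> k2_sign (x * y) = k2_sign x + k2_sign y"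
  unfolding k2_sign_def by (rule k2_symbol_mult_left) auto

lemma k2_sign_divide: "x \<noteq> 0 \<Longrightarrow> y \<noteq> 0 \<Longrightarrow> k2_sign (x / y) = k2_sign x + k2_sign y"
  using k2_symbol_divide_left[of x y "- 1"] k2_sign_uminus[of y] by (simp add: k2_sign_def)

lemma k2_symbol_self: "x \<noteq> 0 \<Longrightarrow> k2_symbol x x = k2_sign x"
  using k2_symbol_mult_right[of x "- 1" "- x"] k2_symbol_minus_self[of x] by (simp add: k2_sign_def)

lemma k2_symbol_minus_one_left: "x \<noteq> 0 \<Longrightarrow> k2_symbol (- 1) x = k2_sign x"
  using k2_symbol_antisym[of x "- 1"] k2_sign_uminus[of x] by (simp add: k2_sign_def)

lemma k2_symbol_minus_right: "x \<noteq> 0 \<Longrightarrow> y \<noteq> 0 \<Longrightarrow> k2_symbol x (- y) = k2_sign x + k2_symbol x y"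
  using k2_symbol_mult_right[of x "- 1" y] by (simp add: k2_sign_def)

lemma k2_symbol_minus_left: "x \<noteq> 0 \<Longrightarrow> y \<noteq> 0 \<Longrightarrow> k2_symbol (- x) y = k2_sign y + k2_symbol x y"
  using k2_symbol_mult_left[of "- 1" x y] k2_symbol_minus_one_left[of y] by simp

(* Rewriting with these splits symbols of products, quotients and negatives into symbols of
   the factors and signs {x,-1}; with instances of k2_symbol_antisym fixing an orientation of
   each pair of atoms, simp then decides the identities between symbols below. *)
lemmas k2_symbol_expand =
  k2_symbol_mult_left k2_symbol_mult_right k2_symbol_divide_left k2_symbol_divide_right
  k2_symbol_minus_left k2_symbol_minus_right k2_symbol_self k2_symbol_minus_one_left
  k2_sign_mult k2_sign_divide k2_sign_add_self k2_sign_add_self_left k2_sign_uminus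

definition k2_pairing :: "'f::field \<Rightarrow> 'f \<Rightarrow> 'f \<Rightarrow> 'f k2" where
  "k2_pairing x y p = k2_symbol x y - k2_symbol x p + k2_symbol y (- p)"

lemma k2_pairing_swap:
  assumes "x \<noteq> 0" "y \<noteq> 0" "p \<noteq> 0"
  shows "k2_pairing y x (- p) = - k2_pairing x y p"
  using assms k2_symbol_antisym[of x y] by (simp add: k2_pairing_def k2_symbol_expand)

lemma k2_symbol_divide_divide:
  assumes "x \<noteq> 0" "x' \<noteq> 0" "y \<noteq> 0" "y' \<noteq> 0" "p \<noteq> 0"
  shows "k2_symbol (x / x') (y / y') =
    k2_pairing x y p - k2_pairing x y' p - k2_pairing x' y p + k2_pairing x' y' p"
  using assms by (simp add: k2_pairing_def k2_symbol_expand)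

lemma k2_symbol_triangle:
  assumes "x \<noteq> 0" "y \<noteq> 0" "z \<noteq> 0" "p \<noteq> 0" "q \<noteq> 0" "r \<noteq> 0"
  shows "k2_symbol ((q / r) * y / x) ((p / - r) * z / x) =
    k2_pairing x y p + k2_pairing y z r + k2_pairing z x (- q) + k2_symbol (q / r) (p / - r)"
  using assms
    k2_symbol_antisym[of x y] k2_symbol_antisym[of x z] k2_symbol_antisym[of x p]
    k2_symbol_antisym[of x q] k2_symbol_antisym[of x r] k2_symbol_antisym[of y z]
    k2_symbol_antisym[of y p] k2_symbol_antisym[of y q] k2_symbol_antisym[of y r]
    k2_symbol_antisym[of z p] k2_symbol_antisym[of z q] k2_symbol_antisym[of z r]
    k2_symbol_antisym[of p q] k2_symbol_antisym[of p r] k2_symbol_antisym[of q r]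
  by (simp add: k2_pairing_def k2_symbol_expand)

lemma k2_symbol_bracket_rotate:
  assumes "p \<noteq> 0" "q \<noteq> 0" "r \<noteq> 0"
  shows "k2_symbol (- p / - q) (r / q) = k2_symbol (q / r) (p / - r)"
  using assms k2_symbol_antisym[of p q] k2_symbol_antisym[of p r] k2_symbol_antisym[of q r]
  by (simp add: k2_symbol_expand)

lemma k2_symbol_bracket_cocycle:
  assumes nz: "a \<noteq> 0" "b \<noteq> 0" "c \<noteq> 0" "d \<noteq> 0" "e \<noteq> 0" "f \<noteq> 0"
    and pluecker: "a * f - b * e + c * d = 0"
  shows "k2_symbol (e / f) (d / - f) =
    k2_symbol (b / d) (a / - d) + k2_symbol (c / f) (b / - f) + k2_symbol (a / - e) (c / e)"
proof -
  have "a * f / (b * e) \<noteq> 1" and "1 - a * f / (b * e) = c * d / (b * e)"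
    using nz pluecker by (auto simp: field_simps)
  then have steinberg: "k2_symbol (a * f / (b * e)) (c * d / (b * e)) = 0"
    using nz k2_symbol_one_minus[of "a * f / (b * e)"] by simp
  have "k2_symbol (e / f) (d / - f) -
      (k2_symbol (b / d) (a / - d) + k2_symbol (c / f) (b / - f) + k2_symbol (a / - e) (c / e))
    + k2_symbol (a * f / (b * e)) (c * d / (b * e)) = 0"
    using nz
      k2_symbol_antisym[of a b] k2_symbol_antisym[of a c] k2_symbol_antisym[of a d]
      k2_symbol_antisym[of a e] k2_symbol_antisym[of a f] k2_symbol_antisym[of b c]
      k2_symbol_antisym[of b d] k2_symbol_antisym[of b e] k2_symbol_antisym[of b f]
      k2_symbol_antisym[of c d] k2_symbol_antisym[of c e] k2_symbol_antisym[of c f]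
      k2_symbol_antisym[of d e] k2_symbol_antisym[of d f] k2_symbol_antisym[of e f]
    by (simp add: k2_symbol_expand)
  then show ?thesis
    using steinberg by simp
qed

locale pairing_with_cocycle =
  fixes N :: nat and Ns :: "nat \<Rightarrow> nat"
    and E :: "nat \<Rightarrow> nat \<Rightarrow> nat \<Rightarrow> nat \<Rightarrow> 'g::ab_group_add"
    and \<kappa> :: "nat \<Rightarrow> nat \<Rightarrow> nat \<Rightarrow> 'g"
  assumes two_le_N: "2 \<le> N"
    and Ns_pos: "\<And>i. 1 \<le> i \<Longrightarrow> i \<le> N \<Longrightarrow> 1 \<le> Ns i"
    and E_antisym: "\<And>i j k l. (i, j) \<in> idx N Ns \<Longrightarrow> (k, l) \<in> idx N Ns \<Longrightarrow> i \<noteq> k \<Longrightarrow>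
      E k l i j = - E i j k l"
    and \<kappa>_swap: "\<And>i k m. distinct [i, k, m] \<Longrightarrow> {i, k, m} \<subseteq> {1..N} \<Longrightarrow> \<kappa> i m k = - \<kappa> i k m"
    and \<kappa>_rotate: "\<And>i k m. distinct [i, k, m] \<Longrightarrow> {i, k, m} \<subseteq> {1..N} \<Longrightarrow> \<kappa> k m i = \<kappa> i k m"
    and \<kappa>_cocycle: "\<And>k m n. distinct [k, m, n] \<Longrightarrow> {k, m, n} \<subseteq> {2..N} \<Longrightarrow>
      \<kappa> k m n = \<kappa> 1 k m + \<kappa> 1 m n + \<kappa> 1 n k"
begin

definition T_value :: "nat \<Rightarrow> nat \<Rightarrow> nat \<Rightarrow> nat \<Rightarrow> nat \<Rightarrow> nat \<Rightarrow> 'g" where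
  "T_value i j k l m n = E i j k l + E k l m n + E m n i j + \<kappa> i k m"

definition R_value :: "nat \<Rightarrow> nat \<Rightarrow> nat \<Rightarrow> nat \<Rightarrow> nat \<Rightarrow> nat \<Rightarrow> 'g" where
  "R_value i j k l m n = E i j l m - E i j l n - E i k l m + E i k l n"

definition reduced_values :: "'g set" where
  "reduced_values =
     {R_value 1 1 j 2 1 m | j m. 1 < j \<and> j \<le> Ns 1 \<and> 1 < m \<and> m \<le> Ns 2}
   \<union> {T_value 1 1 k l m n | k l m n.
       2 \<le> k \<and> k < m \<and> m \<le> N \<and> 1 \<le> l \<and> l \<le> Ns k \<and> 1 \<le> n \<and> n \<le> Ns m}
   \<union> {T_value 1 j 2 1 m n | j m n.
       2 \<le> j \<and> j \<le> Ns 1 \<and> 3 \<le> m \<and> m \<le> N \<and> 1 \<le> n \<and> n \<le> Ns m}"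

(* The potential makes E_normal vanish on the spanning tree of pairs ((1,1),(k,l)) and
   ((1,j),(2,1)). Passing from E to E_normal changes no T_value or R_value: the potential
   cancels around triangles and rectangles, and \<kappa>\<^sub>1 sums to \<kappa> around triangles by the
   cocycle condition. *)
definition potential :: "nat \<Rightarrow> nat \<Rightarrow> 'g" where
  "potential i j =
     (if i = 1 then if j = 1 then 0 else E 1 j 2 1 - E 1 1 2 1 else - E 1 1 i j)"

definition \<kappa>\<^sub>1 :: "nat \<Rightarrow> nat \<Rightarrow> 'g" where
  "\<kappa>\<^sub>1 i k = (if i = 1 \<or> k = 1 then 0 else \<kappa> 1 i k)"

definition E_normal :: "nat \<Rightarrow> nat \<Rightarrow> nat \<Rightarrow> nat \<Rightarrow> 'g" where
  "E_normal i j k l = E i j k l - potential i j + potential k l + \<kappa>\<^sub>1 i k"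

lemma reduced_valuesI:
  "1 < j \<Longrightarrow> j \<le> Ns 1 \<Longrightarrow> 1 < m \<Longrightarrow> m \<le> Ns 2 \<Longrightarrow> R_value 1 1 j 2 1 m \<in> reduced_values"
  "2 \<le> k \<Longrightarrow> k < m \<Longrightarrow> m \<le> N \<Longrightarrow> 1 \<le> l \<Longrightarrow> l \<le> Ns k \<Longrightarrow> 1 \<le> n \<Longrightarrow> n \<le> Ns m \<Longrightarrow>
    T_value 1 1 k l m n \<in> reduced_values"
  "2 \<le> j \<Longrightarrow> j \<le> Ns 1 \<Longrightarrow> 3 \<le> m \<Longrightarrow> m \<le> N \<Longrightarrow> 1 \<le> n \<Longrightarrow> n \<le> Ns m \<Longrightarrow>
    T_value 1 j 2 1 m n \<in> reduced_values"
  unfolding reduced_values_def by blast+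

lemma one_one_mem_idx: "(1, 1) \<in> idx N Ns" and two_one_mem_idx: "(2, 1) \<in> idx N Ns"
  using two_le_N Ns_pos[of 1] Ns_pos[of 2] by (auto simp: idx_def)

lemma \<kappa>\<^sub>1_antisym:
  assumes "{i, k} \<subseteq> {1..N}" "i \<noteq> k"
  shows "\<kappa>\<^sub>1 k i = - \<kappa>\<^sub>1 i k"
  using assms two_le_N \<kappa>_swap[of 1 i k] by (auto simp: \<kappa>\<^sub>1_def)

lemma \<kappa>\<^sub>1_triangle:
  assumes "distinct [i, k, m]" "{i, k, m} \<subseteq> {1..N}"
  shows "\<kappa>\<^sub>1 i k + \<kappa>\<^sub>1 k m + \<kappa>\<^sub>1 m i = \<kappa> i k m"
proof -
  consider "i = 1" | "k = 1" | "m = 1" | "{i, k, m} \<subseteq> {2..N}"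
    using assms(2) by fastforce
  then show ?thesis
  proof cases
    case 2
    then show ?thesis using assms two_le_N \<kappa>_rotate[of i 1 m] by (simp add: \<kappa>\<^sub>1_def)
  next
    case 3
    then show ?thesis using assms two_le_N \<kappa>_rotate[of 1 i k] by (simp add: \<kappa>\<^sub>1_def)
  next
    case 4
    then show ?thesis using assms \<kappa>_cocycle[of i k m] by (simp add: \<kappa>\<^sub>1_def)
  qed (use assms in \<open>simp add: \<kappa>\<^sub>1_def\<close>)
qed

lemma E_normal_antisym:
  assumes "(i, j) \<in> idx N Ns" "(k, l) \<in> idx N Ns" "i \<noteq> k"
  shows "E_normal k l i j = - E_normal i j k l"
  using assms E_antisym[of i j k l] \<kappa>\<^sub>1_antisym[of i k] by (auto simp: E_normal_def idx_def)

lemma T_value_eq_E_normal: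
  assumes "(i, j) \<in> idx N Ns" "(k, l) \<in> idx N Ns" "(m, n) \<in> idx N Ns" "distinct [i, k, m]"
  shows "T_value i j k l m n = E_normal i j k l + E_normal k l m n + E_normal m n i j"
  using assms \<kappa>\<^sub>1_triangle[of i k m] by (auto simp: T_value_def E_normal_def idx_def)

lemma R_value_eq_E_normal:
  "R_value i j k l m n = E_normal i j l m - E_normal i j l n - E_normal i k l m + E_normal i k l n"
  by (simp add: R_value_def E_normal_def)

lemma E_normal_line_one_mem:
  assumes ij: "(1, j) \<in> idx N Ns" and kl: "(k, l) \<in> idx N Ns" and "k \<noteq> 1"
  shows "E_normal 1 j k l \<in> gen_subgroup reduced_values"
proof -
  consider "j = 1" | "j \<noteq> 1" "k = 2" "l = 1" | "j \<noteq> 1" "k = 2" "l \<noteq> 1" | "j \<noteq> 1" "k \<ge> 3"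
    using \<open>k \<noteq> 1\<close> kl unfolding idx_def by fastforce
  then show ?thesis
  proof cases
    case 1
    then show ?thesis using \<open>k \<noteq> 1\<close> by (simp add: E_normal_def potential_def \<kappa>\<^sub>1_def gen_zero)
  next
    case 2
    then show ?thesis by (simp add: E_normal_def potential_def \<kappa>\<^sub>1_def gen_zero)
  next
    case 3
    then have "R_value 1 1 j 2 1 l \<in> reduced_values"
      using ij kl by (intro reduced_valuesI) (auto simp: idx_def)
    moreover have "R_value 1 1 j 2 1 l = E_normal 1 j k l"
      using 3 by (simp add: R_value_def E_normal_def potential_def \<kappa>\<^sub>1_def algebra_simps)
    ultimately show ?thesis by (simp add: gen_base)
  next
    case 4
    have "T_value 1 1 2 1 k l \<in> reduced_values"
      using 4 kl Ns_pos[of 2] by (intro reduced_valuesI) (auto simp: idx_def)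
    moreover have "T_value 1 j 2 1 k l \<in> reduced_values"
      using 4 ij kl by (intro reduced_valuesI) (auto simp: idx_def)
    moreover have "T_value 1 1 2 1 k l - T_value 1 j 2 1 k l = E_normal 1 j k l"
      using 4 ij kl one_one_mem_idx E_antisym[of 1 1 k l] E_antisym[of 1 j k l]
      by (simp add: T_value_def E_normal_def potential_def \<kappa>\<^sub>1_def algebra_simps)
    ultimately show ?thesis by (metis gen_base gen_diff)
  qed
qed

lemma E_normal_increasing_mem:
  assumes "(i, j) \<in> idx N Ns" "(k, l) \<in> idx N Ns" "i \<noteq> 1" "i < k"
  shows "E_normal i j k l \<in> gen_subgroup reduced_values"
proof -
  have "k \<noteq> 1"
    using assms by (auto simp: idx_def)
  then have "T_value 1 1 i j k l = E_normal i j k l"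
    using assms one_one_mem_idx E_antisym[of 1 1 k l]
    by (simp add: T_value_def E_normal_def potential_def \<kappa>\<^sub>1_def algebra_simps)
  moreover have "T_value 1 1 i j k l \<in> reduced_values"
    using assms by (intro reduced_valuesI) (auto simp: idx_def)
  ultimately show ?thesis by (simp add: gen_base)
qed

lemma E_normal_mem:
  assumes ij: "(i, j) \<in> idx N Ns" and kl: "(k, l) \<in> idx N Ns" and "i \<noteq> k"
  shows "E_normal i j k l \<in> gen_subgroup reduced_values"
proof -
  have increasing: "E_normal i j k l \<in> gen_subgroup reduced_values"
    if "(i, j) \<in> idx N Ns" "(k, l) \<in> idx N Ns" "i < k" for i j k l
    using that E_normal_line_one_mem E_normal_increasing_mem by (cases "i = 1") auto
  show ?thesis
  proof (cases "i < k")
    case False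
    with \<open>i \<noteq> k\<close> have "E_normal k l i j \<in> gen_subgroup reduced_values"
      using increasing[OF kl ij] by simp
    then show ?thesis
      using E_normal_antisym[OF ij kl \<open>i \<noteq> k\<close>] gen_subgroup_uminus by fastforce
  qed (use increasing[OF ij kl] in simp)
qed

lemma T_value_mem:
  assumes "(i, j) \<in> idx N Ns" "(k, l) \<in> idx N Ns" "(m, n) \<in> idx N Ns" "distinct [i, k, m]"
  shows "T_value i j k l m n \<in> gen_subgroup reduced_values"
  using assms by (simp add: T_value_eq_E_normal E_normal_mem gen_subgroup_add)

lemma R_value_mem:
  assumes "(i, j) \<in> idx N Ns" "(i, k) \<in> idx N Ns" "(l, m) \<in> idx N Ns" "(l, n) \<in> idx N Ns" "i \<noteq> l"
  shows "R_value i j k l m n \<in> gen_subgroup reduced_values"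
  using assms by (simp add: R_value_eq_E_normal E_normal_mem gen_subgroup_add gen_diff)

end

lemma bracket_antisym: "bracket a b k i = - bracket a b i k"
  by (simp add: bracket_def)

lemma bracket_pluecker:
  "bracket a b i k * bracket a b m n - bracket a b i m * bracket a b k n
     + bracket a b i n * bracket a b k m = 0"
  unfolding bracket_def by algebra

lemma finite_idx: "finite (idx N Ns)"
proof -
  have "idx N Ns = Sigma {1..N} (\<lambda>i. {1..Ns i})"
    by (auto simp: idx_def)
  then show ?thesis by simp
qed

locale line_arrangement =
  fixes N :: nat and Ns :: "nat \<Rightarrow> nat" and a b :: "nat \<Rightarrow> 'a::field" and c :: "nat \<Rightarrow> nat \<Rightarrow> 'a"
    and \<iota> :: "'a \<Rightarrow> 'f::field" and X Y :: 'f
  assumes two_le_N: "2 \<le> N"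
    and Ns_pos: "\<And>i. 1 \<le> i \<Longrightarrow> i \<le> N \<Longrightarrow> 1 \<le> Ns i"
    and bracket_nonzero: "\<And>i k. 1 \<le> i \<Longrightarrow> i \<le> N \<Longrightarrow> 1 \<le> k \<Longrightarrow> k \<le> N \<Longrightarrow> i \<noteq> k \<Longrightarrow>
      bracket a b i k \<noteq> 0"
    and \<iota>_add: "\<And>u v. \<iota> (u + v) = \<iota> u + \<iota> v"
    and \<iota>_mult: "\<And>u v. \<iota> (u * v) = \<iota> u * \<iota> v"
    and \<iota>_one: "\<iota> 1 = 1"
    and L_nonzero: "\<And>i j. (i, j) \<in> idx N Ns \<Longrightarrow> Lf \<iota> a b c X Y i j \<noteq> 0"
begin

lemma \<iota>_zero: "\<iota> 0 = 0"
  using \<iota>_add[of 0 0] by (metis add.right_neutral add_left_cancel)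

lemma \<iota>_uminus: "\<iota> (- u) = - \<iota> u"
  using minus_unique[of "\<iota> u" "\<iota> (- u)"] \<iota>_add[of u "- u"] by (simp add: \<iota>_zero)

lemma \<iota>_diff: "\<iota> (u - v) = \<iota> u - \<iota> v"
  using \<iota>_add[of u "- v"] by (simp add: \<iota>_uminus)

lemma \<iota>_nonzero: "u \<noteq> 0 \<Longrightarrow> \<iota> u \<noteq> 0"
  using \<iota>_mult[of u "inverse u"] by (auto simp: \<iota>_one)

lemma \<iota>_divide: "\<iota> (u / v) = \<iota> u / \<iota> v"
proof (cases "v = 0")
  case False
  then have "\<iota> (u / v) * \<iota> v = \<iota> u"
    by (simp flip: \<iota>_mult)
  with \<iota>_nonzero[OF False] show ?thesis
    by (simp add: field_simps)
qed (simp add: \<iota>_zero)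

abbreviation L :: "nat \<Rightarrow> nat \<Rightarrow> 'f" where
  "L i j \<equiv> Lf \<iota> a b c X Y i j"

definition br :: "nat \<Rightarrow> nat \<Rightarrow> 'f" where
  "br i k = \<iota> (bracket a b i k)"

lemma br_antisym: "br k i = - br i k"
  unfolding br_def by (subst bracket_antisym) (rule \<iota>_uminus)

lemma br_nonzero: "{i, k} \<subseteq> {1..N} \<Longrightarrow> i \<noteq> k \<Longrightarrow> br i k \<noteq> 0"
  unfolding br_def by (intro \<iota>_nonzero bracket_nonzero) auto

lemma br_pluecker: "br i k * br m n - br i m * br k n + br i n * br k m = 0"
  using arg_cong[OF bracket_pluecker, of \<iota> a b i k m n]
  by (simp add: br_def \<iota>_add \<iota>_diff \<iota>_mult \<iota>_zero)

definition line_pairing :: "nat \<Rightarrow> nat \<Rightarrow> nat \<Rightarrow> nat \<Rightarrow> 'f k2" where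
  "line_pairing i j k l = k2_pairing (L i j) (L k l) (br i k)"

definition bracket_cocycle :: "nat \<Rightarrow> nat \<Rightarrow> nat \<Rightarrow> 'f k2" where
  "bracket_cocycle i k m = k2_symbol (br i m / br k m) (br i k / br m k)"

sublocale pairing_with_cocycle N Ns line_pairing bracket_cocycle
proof
  show "2 \<le> N" "\<And>i. 1 \<le> i \<Longrightarrow> i \<le> N \<Longrightarrow> 1 \<le> Ns i"
    using two_le_N Ns_pos by auto
  show "line_pairing k l i j = - line_pairing i j k l"
    if "(i, j) \<in> idx N Ns" "(k, l) \<in> idx N Ns" "i \<noteq> k" for i j k l
    using that L_nonzero br_nonzero[of i k]
    by (simp add: line_pairing_def br_antisym[of k i] k2_pairing_swap idx_def)
  show "bracket_cocycle i m k = - bracket_cocycle i k m"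
    if "distinct [i, k, m]" "{i, k, m} \<subseteq> {1..N}" for i k m
    using that br_nonzero[of i k] br_nonzero[of i m] br_nonzero[of k m] br_nonzero[of m k]
      k2_symbol_antisym[of "br i m / br k m" "br i k / br m k"]
    by (simp add: bracket_cocycle_def)
  show "bracket_cocycle k m i = bracket_cocycle i k m"
    if "distinct [i, k, m]" "{i, k, m} \<subseteq> {1..N}" for i k m
    using that br_nonzero[of i k] br_nonzero[of i m] br_nonzero[of k m]
      k2_symbol_bracket_rotate[of "br i k" "br i m" "br k m"]
    by (simp add: bracket_cocycle_def br_antisym[of k i] br_antisym[of m i] br_antisym[of m k])
  show "bracket_cocycle k m n =
      bracket_cocycle 1 k m + bracket_cocycle 1 m n + bracket_cocycle 1 n k"
    if "distinct [k, m, n]" "{k, m, n} \<subseteq> {2..N}" for k m n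
    using that two_le_N br_pluecker[of 1 k m n]
      br_nonzero[of 1 k] br_nonzero[of 1 m] br_nonzero[of 1 n]
      br_nonzero[of k m] br_nonzero[of k n] br_nonzero[of m n]
      k2_symbol_bracket_cocycle[of "br 1 k" "br 1 m" "br 1 n" "br k m" "br k n" "br m n"]
    by (simp add: bracket_cocycle_def br_antisym[of m k] br_antisym[of n k] br_antisym[of n m])
qed

lemma abs_k2_Tel:
  assumes "(i, j) \<in> idx N Ns" "(k, l) \<in> idx N Ns" "(m, n) \<in> idx N Ns" "distinct [i, k, m]"
  shows "abs_k2 (Tel \<iota> a b c X Y i j k l m n) = T_value i j k l m n"
  using assms L_nonzero br_nonzero[of i k] br_nonzero[of i m] br_nonzero[of k m]
    k2_symbol_triangle[of "L i j" "L k l" "L m n" "br i k" "br i m" "br k m"]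
  by (simp add: Tel_def k2_symbol.abs_eq[symmetric] \<iota>_divide T_value_def line_pairing_def
      bracket_cocycle_def br_def[symmetric] br_antisym[of k i] br_antisym[of m k] br_antisym[of m i]
      idx_def)

lemma abs_k2_Rel:
  assumes "(i, j) \<in> idx N Ns" "(i, k) \<in> idx N Ns" "(l, m) \<in> idx N Ns" "(l, n) \<in> idx N Ns" "i \<noteq> l"
  shows "abs_k2 (Rel \<iota> a b c X Y i j k l m n) = R_value i j k l m n"
  using assms L_nonzero br_nonzero[of i l]
    k2_symbol_divide_divide[of "L i j" "L i k" "L l m" "L l n" "br i l"]
  by (simp add: Rel_def k2_symbol.abs_eq[symmetric] R_value_def line_pairing_def idx_def)

definition all_generators :: "(('f \<times> 'f) \<Rightarrow>\<^sub>0 int) set" where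
  "all_generators =
     {Rel \<iota> a b c X Y i j k l m n | i j k l m n.
        (i, j) \<in> idx N Ns \<and> (i, k) \<in> idx N Ns \<and> (l, m) \<in> idx N Ns \<and> (l, n) \<in> idx N Ns \<and> i \<noteq> l}
   \<union> {Tel \<iota> a b c X Y i j k l m n | i j k l m n.
        (i, j) \<in> idx N Ns \<and> (k, l) \<in> idx N Ns \<and> (m, n) \<in> idx N Ns \<and> i \<noteq> k \<and> i \<noteq> m \<and> k \<noteq> m}"

definition reduced_generators :: "(('f \<times> 'f) \<Rightarrow>\<^sub>0 int) set" where
  "reduced_generators =
     {Rel \<iota> a b c X Y 1 1 j 2 1 m | j m. 1 < j \<and> j \<le> Ns 1 \<and> 1 < m \<and> m \<le> Ns 2}
   \<union> {Tel \<iota> a b c X Y 1 1 k l m n | k l m n.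
        2 \<le> k \<and> k < m \<and> m \<le> N \<and> 1 \<le> l \<and> l \<le> Ns k \<and> 1 \<le> n \<and> n \<le> Ns m}
   \<union> {Tel \<iota> a b c X Y 1 j 2 1 m n | j m n.
        2 \<le> j \<and> j \<le> Ns 1 \<and> 3 \<le> m \<and> m \<le> N \<and> 1 \<le> n \<and> n \<le> Ns m}"

lemma all_generatorsI:
  "(i, j) \<in> idx N Ns \<Longrightarrow> (i, k) \<in> idx N Ns \<Longrightarrow> (l, m) \<in> idx N Ns \<Longrightarrow> (l, n) \<in> idx N Ns \<Longrightarrow> i \<noteq> l \<Longrightarrow>
    Rel \<iota> a b c X Y i j k l m n \<in> all_generators"
  "(i, j) \<in> idx N Ns \<Longrightarrow> (k, l) \<in> idx N Ns \<Longrightarrow> (m, n) \<in> idx N Ns \<Longrightarrow>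
    i \<noteq> k \<Longrightarrow> i \<noteq> m \<Longrightarrow> k \<noteq> m \<Longrightarrow> Tel \<iota> a b c X Y i j k l m n \<in> all_generators"
  unfolding all_generators_def by blast+

lemma reduced_generators_subset: "reduced_generators \<subseteq> all_generators"
  using one_one_mem_idx two_one_mem_idx
  unfolding reduced_generators_def by (auto intro!: all_generatorsI simp: idx_def)

lemma abs_k2_all_generators_subset: "abs_k2 ` all_generators \<subseteq> gen_subgroup reduced_values"
  unfolding all_generators_def
  by (auto simp: abs_k2_Rel abs_k2_Tel R_value_mem T_value_mem)

lemma reduced_values_subset_abs_k2: "reduced_values \<subseteq> abs_k2 ` reduced_generators"
proof
  fix v assume "v \<in> reduced_values"
  then consider
      (R) j m where "v = R_value 1 1 j 2 1 m" "1 < j" "j \<le> Ns 1" "1 < m" "m \<le> Ns 2"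
    | (T1) k l m n where "v = T_value 1 1 k l m n"
        "2 \<le> k" "k < m" "m \<le> N" "1 \<le> l" "l \<le> Ns k" "1 \<le> n" "n \<le> Ns m"
    | (T2) j m n where "v = T_value 1 j 2 1 m n"
        "2 \<le> j" "j \<le> Ns 1" "3 \<le> m" "m \<le> N" "1 \<le> n" "n \<le> Ns m"
    unfolding reduced_values_def by blast
  then show "v \<in> abs_k2 ` reduced_generators"
  proof cases
    case R
    then have "v = abs_k2 (Rel \<iota> a b c X Y 1 1 j 2 1 m)"
      using one_one_mem_idx two_one_mem_idx two_le_N by (simp add: abs_k2_Rel idx_def)
    moreover have "Rel \<iota> a b c X Y 1 1 j 2 1 m \<in> reduced_generators"
      using R unfolding reduced_generators_def by blast
    ultimately show ?thesis by blast
  next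
    case T1
    then have "v = abs_k2 (Tel \<iota> a b c X Y 1 1 k l m n)"
      using one_one_mem_idx by (simp add: abs_k2_Tel idx_def)
    moreover have "Tel \<iota> a b c X Y 1 1 k l m n \<in> reduced_generators"
      using T1 unfolding reduced_generators_def by blast
    ultimately show ?thesis by blast
  next
    case T2
    then have "v = abs_k2 (Tel \<iota> a b c X Y 1 j 2 1 m n)"
      using two_one_mem_idx by (simp add: abs_k2_Tel idx_def)
    moreover have "Tel \<iota> a b c X Y 1 j 2 1 m n \<in> reduced_generators"
      using T2 unfolding reduced_generators_def by blast
    ultimately show ?thesis by blast
  qed
qed

theorem K2_span_reduced_generators: "K2_span all_generators = K2_span reduced_generators"
proof -
  have "gen_subgroup (abs_k2 ` all_generators) \<subseteq> gen_subgroup (abs_k2 ` reduced_generators)"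
    using abs_k2_all_generators_subset gen_subgroup_mono[OF reduced_values_subset_abs_k2]
    by (intro gen_subgroup_subset) blast
  moreover have "gen_subgroup (abs_k2 ` reduced_generators) \<subseteq> gen_subgroup (abs_k2 ` all_generators)"
    using reduced_generators_subset by (intro gen_subgroup_mono) blast
  ultimately show ?thesis
    by (simp add: K2_span_eq_vimage)
qed

end

theorem proposition3p2:
  fixes N :: nat and Ns :: "nat \<Rightarrow> nat"
    and lam :: "'a::field" and a b :: "nat \<Rightarrow> 'a" and c :: "nat \<Rightarrow> nat \<Rightarrow> 'a"
    and \<iota> :: "'a \<Rightarrow> 'f::field" and X Y :: 'f
  assumes N2: "N \<ge> 2"
    and Ns1: "\<And>i. 1 \<le> i \<Longrightarrow> i \<le> N \<Longrightarrow> Ns i \<ge> 1"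
    and ab_nz: "\<And>i. 1 \<le> i \<Longrightarrow> i \<le> N \<Longrightarrow> (a i, b i) \<noteq> (0, 0)"
    and lines_distinct: "\<And>i j i' j'. (i, j) \<in> idx N Ns \<Longrightarrow> (i', j') \<in> idx N Ns \<Longrightarrow> (i, j) \<noteq> (i', j') \<Longrightarrow>
           \<not> (\<exists>t. t \<noteq> 0 \<and> a i = t * a i' \<and> b i = t * b i' \<and> c i j = t * c i' j')"
    and br_nz: "\<And>i k. 1 \<le> i \<Longrightarrow> i \<le> N \<Longrightarrow> 1 \<le> k \<Longrightarrow> k \<le> N \<Longrightarrow> i \<noteq> k \<Longrightarrow> bracket a b i k \<noteq> 0"
    and lam_nz: "lam \<noteq> 0"
    and irred: "irreducible (fpoly N Ns lam a b c)"
    and FF: "is_function_field \<iota> X Y"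
    and curve: "\<iota> lam * (\<Prod>(i, j)\<in>idx N Ns. Lf \<iota> a b c X Y i j) = 1"
  shows "K2_span
     ({Rel \<iota> a b c X Y i j k l m n | i j k l m n.
          (i, j) \<in> idx N Ns \<and> (i, k) \<in> idx N Ns \<and> (l, m) \<in> idx N Ns \<and> (l, n) \<in> idx N Ns \<and> i \<noteq> l}
      \<union> {Tel \<iota> a b c X Y i j k l m n | i j k l m n.
          (i, j) \<in> idx N Ns \<and> (k, l) \<in> idx N Ns \<and> (m, n) \<in> idx N Ns \<and> i \<noteq> k \<and> i \<noteq> m \<and> k \<noteq> m})
   = K2_span
     ({Rel \<iota> a b c X Y 1 1 j 2 1 m | j m. 1 < j \<and> j \<le> Ns 1 \<and> 1 < m \<and> m \<le> Ns 2}
      \<union> {Tel \<iota> a b c X Y 1 1 k l m n | k l m n.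
          2 \<le> k \<and> k < m \<and> m \<le> N \<and> 1 \<le> l \<and> l \<le> Ns k \<and> 1 \<le> n \<and> n \<le> Ns m}
      \<union> {Tel \<iota> a b c X Y 1 j 2 1 m n | j m n.
          2 \<le> j \<and> j \<le> Ns 1 \<and> 3 \<le> m \<and> m \<le> N \<and> 1 \<le> n \<and> n \<le> Ns m})"
proof -
  have \<iota>_hom: "\<iota> (u + v) = \<iota> u + \<iota> v" "\<iota> (u * v) = \<iota> u * \<iota> v" "\<iota> 1 = 1" for u v
    using FF unfolding is_function_field_def by auto
  have "Lf \<iota> a b c X Y i j \<noteq> 0" if "(i, j) \<in> idx N Ns" for i j
  proof
    assume "Lf \<iota> a b c X Y i j = 0"
    with that have "(\<Prod>(i, j)\<in>idx N Ns. Lf \<iota> a b c X Y i j) = 0"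
      using finite_idx by (subst prod_zero_iff) force+
    with curve show False by simp
  qed
  then interpret line_arrangement N Ns a b c \<iota> X Y
    using N2 Ns1 br_nz \<iota>_hom by unfold_locales auto
  show ?thesis
    using K2_span_reduced_generators unfolding all_generators_def reduced_generators_def .
qed

end
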